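(* Let $R$ be a ring with identity, let ${}_RM$ be a semisimple left $R$-module and let $\varphi:M\to M$ be a nonzero nilpotent $R$-endomorphism. Then the following are equivalent: (1) there is a nilpotent Jordan normal base $\{x_i\mid 1\le i\le n\}$ of ${}_RM$ with respect to $\varphi$ consisting of one block (i.e. $x_{i+1}=\varphi(x_i)$ for $1\le i<n$ and $\varphi(x_n)=0$); (2) $\varphi$ is an indecomposable nilpotent element of the ring $\mathrm{Hom}_R(M,M)$; (3) ${}_RM$ is finitely generated and $\varphi^{d-1}\neq0$, where $d=\dim_R(M)$ is the composition length of ${}_RM$.
   Context: For an $R$-endomorphism $\varphi$ of a left $R$-module ${}_RM$, a subset $\{x_{\gamma,i}\mid\gamma\in\Gamma,1\le i\le k_\gamma\}\subseteq M$ (with integers $k_\gamma\ge1$) is a nilpotent Jordan normal base of ${}_RM$ with respect to $\varphi$ if each submodule $Rx_{\gamma,i}$ is simple, $M=\bigoplus_{\gamma,i}Rx_{\gamma,i}$ is a direct sum, $\varphi(x_{\gamma,i})=x_{\gamma,i+1}$ for $1\le i<k_\gamma$, $\varphi(x_{\gamma,k_\gamma})=0$, and $\{k_\gamma\mid\gamma\in\Gamma\}$ is bounded; $\Gamma$ is the set of blocks. A nilpotent element $s$ of a ring $S$ is decomposable if $es=se$ for some idempotent $e\in S$ with $0\ne e\ne1$; a nilpotent element which is not decomposable is indecomposable. *)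

theory Defs
  imports "HOL-Algebra.Ring"
begin

definition lmodule :: "('r::ring_1 \<Rightarrow> 'm::ab_group_add \<Rightarrow> 'm) \<Rightarrow> bool" where
  "lmodule s \<longleftrightarrow>
     (\<forall>a b x. s (a + b) x = s a x + s b x) \<and>
     (\<forall>a x y. s a (x + y) = s a x + s a y) \<and>
     (\<forall>a b x. s (a * b) x = s a (s b x)) \<and>
     (\<forall>x. s 1 x = x)"

definition submodule :: "('r \<Rightarrow> 'm::ab_group_add \<Rightarrow> 'm) \<Rightarrow> 'm set \<Rightarrow> bool" where
  "submodule s N \<longleftrightarrow> 0 \<in> N \<and> (\<forall>x\<in>N. \<forall>y\<in>N. x + y \<in> N) \<and> (\<forall>r. \<forall>x\<in>N. s r x \<in> N)"

definition gen :: "('r \<Rightarrow> 'm::ab_group_add \<Rightarrow> 'm) \<Rightarrow> 'm set \<Rightarrow> 'm set" where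
  "gen s S = \<Inter>{N. submodule s N \<and> S \<subseteq> N}"

definition cyc :: "('r \<Rightarrow> 'm \<Rightarrow> 'm) \<Rightarrow> 'm \<Rightarrow> 'm set" where
  "cyc s x = range (\<lambda>r. s r x)"

definition simple_sub :: "('r \<Rightarrow> 'm::ab_group_add \<Rightarrow> 'm) \<Rightarrow> 'm set \<Rightarrow> bool" where
  "simple_sub s N \<longleftrightarrow> submodule s N \<and> N \<noteq> {0} \<and>
     (\<forall>K. submodule s K \<and> K \<subseteq> N \<longrightarrow> K = {0} \<or> K = N)"

definition semisimple :: "('r \<Rightarrow> 'm::ab_group_add \<Rightarrow> 'm) \<Rightarrow> bool" where
  "semisimple s \<longleftrightarrow> gen s (\<Union>{N. simple_sub s N}) = UNIV"

definition finitely_generated :: "('r \<Rightarrow> 'm::ab_group_add \<Rightarrow> 'm) \<Rightarrow> bool" where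
  "finitely_generated s \<longleftrightarrow> (\<exists>F. finite F \<and> gen s F = UNIV)"

definition direct_sum :: "('r \<Rightarrow> 'm::ab_group_add \<Rightarrow> 'm) \<Rightarrow> ('j \<Rightarrow> 'm set) \<Rightarrow> 'j set \<Rightarrow> bool" where
  "direct_sum s N J \<longleftrightarrow>
     (\<forall>j\<in>J. submodule s (N j)) \<and>
     gen s (\<Union>j\<in>J. N j) = UNIV \<and>
     (\<forall>F f. finite F \<and> F \<subseteq> J \<and> (\<forall>j\<in>F. f j \<in> N j) \<and> sum f F = 0 \<longrightarrow> (\<forall>j\<in>F. f j = 0))"

definition comp_series :: "('r \<Rightarrow> 'm::ab_group_add \<Rightarrow> 'm) \<Rightarrow> nat \<Rightarrow> bool" where
  "comp_series s d \<longleftrightarrow> (\<exists>c :: nat \<Rightarrow> 'm set.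
      c 0 = {0} \<and> c d = UNIV \<and> (\<forall>i\<le>d. submodule s (c i)) \<and>
      (\<forall>i<d. c i \<subset> c (Suc i) \<and>
              \<not> (\<exists>N. submodule s N \<and> c i \<subset> N \<and> N \<subset> c (Suc i))))"

definition comp_length :: "('r \<Rightarrow> 'm::ab_group_add \<Rightarrow> 'm) \<Rightarrow> nat" where
  "comp_length s = (LEAST d. comp_series s d)"

definition is_hom :: "('r \<Rightarrow> 'm::ab_group_add \<Rightarrow> 'm) \<Rightarrow> ('m \<Rightarrow> 'm) \<Rightarrow> bool" where
  "is_hom s f \<longleftrightarrow> (\<forall>x y. f (x + y) = f x + f y) \<and> (\<forall>r x. f (s r x) = s r (f x))"

definition End_ring :: "('r \<Rightarrow> 'm::ab_group_add \<Rightarrow> 'm) \<Rightarrow> ('m \<Rightarrow> 'm) ring" where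
  "End_ring s = \<lparr>carrier = {f. is_hom s f}, mult = (\<circ>), one = id,
                 zero = (\<lambda>_. 0), add = (\<lambda>f g x. f x + g x)\<rparr>"

definition nilpotent_elem :: "('a, 'b) ring_scheme \<Rightarrow> 'a \<Rightarrow> bool" where
  "nilpotent_elem S x \<longleftrightarrow> x \<in> carrier S \<and> (\<exists>n::nat. x [^]\<^bsub>S\<^esub> n = \<zero>\<^bsub>S\<^esub>)"

definition decomposable_nilpotent :: "('a, 'b) ring_scheme \<Rightarrow> 'a \<Rightarrow> bool" where
  "decomposable_nilpotent S x \<longleftrightarrow> nilpotent_elem S x \<and>
     (\<exists>e\<in>carrier S. e \<otimes>\<^bsub>S\<^esub> e = e \<and> e \<noteq> \<zero>\<^bsub>S\<^esub> \<and> e \<noteq> \<one>\<^bsub>S\<^esub> \<and>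
        e \<otimes>\<^bsub>S\<^esub> x = x \<otimes>\<^bsub>S\<^esub> e)"

definition indecomposable_nilpotent :: "('a, 'b) ring_scheme \<Rightarrow> 'a \<Rightarrow> bool" where
  "indecomposable_nilpotent S x \<longleftrightarrow> nilpotent_elem S x \<and> \<not> decomposable_nilpotent S x"

text \<open>Nilpotent Jordan normal base: blocks Gamma, block sizes k, elements x gamma i (1 <= i <= k gamma).\<close>
definition nilpotent_jordan_base ::
  "('r \<Rightarrow> 'm::ab_group_add \<Rightarrow> 'm) \<Rightarrow> ('m \<Rightarrow> 'm) \<Rightarrow> 'g set \<Rightarrow> ('g \<Rightarrow> nat) \<Rightarrow> ('g \<Rightarrow> nat \<Rightarrow> 'm) \<Rightarrow> bool" where
  "nilpotent_jordan_base s \<phi> \<Gamma> k x \<longleftrightarrow>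
     (\<forall>\<gamma>\<in>\<Gamma>. 1 \<le> k \<gamma>) \<and>
     (\<forall>\<gamma>\<in>\<Gamma>. \<forall>i\<in>{1..k \<gamma>}. simple_sub s (cyc s (x \<gamma> i))) \<and>
     direct_sum s (\<lambda>(\<gamma>, i). cyc s (x \<gamma> i)) (SIGMA \<gamma>:\<Gamma>. {1..k \<gamma>}) \<and>
     (\<forall>\<gamma>\<in>\<Gamma>. \<forall>i. 1 \<le> i \<and> i < k \<gamma> \<longrightarrow> \<phi> (x \<gamma> i) = x \<gamma> (Suc i)) \<and>
     (\<forall>\<gamma>\<in>\<Gamma>. \<phi> (x \<gamma> (k \<gamma>)) = 0) \<and>
     bdd_above (k ` \<Gamma>)"

end

theory Submission
  imports Defs "HOL-Library.Set_Algebras"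
begin

text \<open>
  (3) \<Longrightarrow> (2): a nontrivial idempotent \<open>e\<close> commuting with \<open>\<phi>\<close> splits \<open>M\<close> into the proper
  \<open>\<phi>\<close>-stable submodules \<open>range e\<close> and \<open>ker e\<close>. On a proper \<open>\<phi>\<close>-stable submodule \<open>A\<close> the power
  \<open>\<phi>\<^sup>d\<^sup>-\<^sup>1\<close> vanishes, where \<open>d\<close> is the composition length: otherwise the submodules
  \<open>A \<inter> ker \<phi>\<^sup>j\<close> (\<open>j \<le> d\<close>) followed by \<open>M\<close> form a strictly increasing chain of length \<open>d + 1\<close>.

  (1) \<Longrightarrow> (3): the \<open>n\<close> simple summands of a one-block Jordan base give a composition series of
  length at most \<open>n\<close>, while \<open>\<phi>\<^sup>n\<^sup>-\<^sup>1 x\<^sub>1 = x\<^sub>n \<noteq> 0\<close>.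

  (2) \<Longrightarrow> (1): let \<open>m\<close> be the nilpotency index and choose \<open>x\<close> with \<open>Rx\<close> simple and
  \<open>\<phi>\<^sup>m\<^sup>-\<^sup>1 x \<noteq> 0\<close>. For a projection \<open>\<pi>\<close> onto the simple submodule \<open>R \<phi>\<^sup>m\<^sup>-\<^sup>1 x\<close>, the module is the
  direct sum of the \<open>\<phi>\<close>-stable submodules \<open>Rx + \<phi>(Rx) + \<dots> + \<phi>\<^sup>m\<^sup>-\<^sup>1(Rx)\<close> and
  \<open>{v. \<forall>j. \<pi> (\<phi>\<^sup>j v) = 0}\<close>. The projection onto the second summand commutes with \<open>\<phi>\<close>, so by
  indecomposability that summand is zero, and then the \<open>\<phi>\<^sup>i x\<close> form a Jordan base with one block.
\<close>

section \<open>Submodules and module homomorphisms\<close>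

lemma submodule_zero: "submodule s N \<Longrightarrow> 0 \<in> N"
  and submodule_add: "submodule s N \<Longrightarrow> x \<in> N \<Longrightarrow> y \<in> N \<Longrightarrow> x + y \<in> N"
  and submodule_scalar: "submodule s N \<Longrightarrow> x \<in> N \<Longrightarrow> s a x \<in> N"
  by (simp_all add: submodule_def)

lemma submodule_sum: "submodule s N \<Longrightarrow> (\<And>i. i \<in> F \<Longrightarrow> f i \<in> N) \<Longrightarrow> sum f F \<in> N"
  by (induct F rule: infinite_finite_induct) (auto simp: submodule_zero submodule_add)

lemma submodule_UNIV: "submodule s UNIV"
  by (simp add: submodule_def)

lemma submodule_Int: "submodule s A \<Longrightarrow> submodule s B \<Longrightarrow> submodule s (A \<inter> B)"
  by (simp add: submodule_def)

lemma submodule_gen: "submodule s (gen s S)"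
  by (auto simp: gen_def submodule_def)

lemma gen_superset: "S \<subseteq> gen s S"
  by (auto simp: gen_def)

lemma gen_least: "submodule s N \<Longrightarrow> S \<subseteq> N \<Longrightarrow> gen s S \<subseteq> N"
  by (auto simp: gen_def)

lemma gen_mono: "A \<subseteq> B \<Longrightarrow> gen s A \<subseteq> gen s B"
  by (auto simp: gen_def)

lemma cyc_subset: "submodule s N \<Longrightarrow> x \<in> N \<Longrightarrow> cyc s x \<subseteq> N"
  by (auto simp: cyc_def submodule_scalar)

lemma simple_sub_submodule: "simple_sub s S \<Longrightarrow> submodule s S"
  by (simp add: simple_sub_def)

lemma simple_sub_Int:
  "simple_sub s S \<Longrightarrow> submodule s N \<Longrightarrow> S \<inter> N = {0} \<or> S \<subseteq> N"
  unfolding simple_sub_def using submodule_Int[of s S N] by blast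

lemma hom_add: "is_hom s f \<Longrightarrow> f (x + y) = f x + f y"
  and hom_scalar: "is_hom s f \<Longrightarrow> f (s a x) = s a (f x)"
  by (simp_all add: is_hom_def)

lemma hom_zero: "is_hom s f \<Longrightarrow> f 0 = 0"
  using hom_add[of s f 0 0] by simp

lemma hom_minus: "is_hom s f \<Longrightarrow> f (- x) = - f x"
  using hom_add[of s f x "- x"] by (simp add: hom_zero eq_neg_iff_add_eq_0 add.commute)

lemma hom_diff: "is_hom s f \<Longrightarrow> f (x - y) = f x - f y"
  by (metis diff_conv_add_uminus hom_add hom_minus)

lemma hom_sum: "is_hom s f \<Longrightarrow> f (sum g F) = (\<Sum>i\<in>F. f (g i))"
  by (induct F rule: infinite_finite_induct) (auto simp: hom_zero hom_add)

lemma hom_funpow: "is_hom s f \<Longrightarrow> is_hom s (f ^^ n)"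
  by (induct n) (auto simp: is_hom_def)

lemma submodule_range: "is_hom s f \<Longrightarrow> submodule s (range f)"
  unfolding submodule_def by (auto simp: image_iff) (metis hom_zero, metis hom_add, metis hom_scalar)

locale left_module =
  fixes s :: "'r::ring_1 \<Rightarrow> 'm::ab_group_add \<Rightarrow> 'm"
  assumes lmodule: "lmodule s"
begin

lemma scalar_add_left: "s (a + b) x = s a x + s b x"
  and scalar_add_right: "s a (x + y) = s a x + s a y"
  and scalar_mult: "s (a * b) x = s a (s b x)"
  and scalar_one [simp]: "s 1 x = x"
  using lmodule by (simp_all add: lmodule_def)

lemma scalar_zero_left [simp]: "s 0 x = 0"
  using scalar_add_left[of 0 0 x] by simp

lemma scalar_zero_right [simp]: "s a 0 = 0"
  using scalar_add_right[of a 0 0] by simp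

lemma scalar_minus_left: "s (- a) x = - s a x"
  using scalar_add_left[of a "- a" x] by (simp add: eq_neg_iff_add_eq_0 add.commute)

lemma scalar_minus_right: "s a (- x) = - s a x"
  using scalar_add_right[of a x "- x"] by (simp add: eq_neg_iff_add_eq_0 add.commute)

lemma scalar_diff_right: "s a (x - y) = s a x - s a y"
  by (metis diff_conv_add_uminus scalar_add_right scalar_minus_right)

lemma scalar_sum_right: "s a (sum f F) = (\<Sum>i\<in>F. s a (f i))"
  by (induct F rule: infinite_finite_induct) (auto simp: scalar_add_right)

lemma cyc_self: "x \<in> cyc s x"
  unfolding cyc_def by (metis rangeI scalar_one)

lemma submodule_minus: "submodule s N \<Longrightarrow> x \<in> N \<Longrightarrow> - x \<in> N"
  using submodule_scalar[of s N x "- 1"] by (simp add: scalar_minus_left)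

lemma submodule_diff: "submodule s N \<Longrightarrow> x \<in> N \<Longrightarrow> y \<in> N \<Longrightarrow> x - y \<in> N"
  by (metis diff_conv_add_uminus submodule_add submodule_minus)

lemma submodule_zero_set: "submodule s {0}"
  by (simp add: submodule_def)

lemma submodule_set_plus:
  assumes A: "submodule s A" and B: "submodule s B"
  shows "submodule s (A + B)"
  unfolding submodule_def
proof (intro conjI ballI allI)
  show "0 \<in> A + B" using set_plus_intro[OF submodule_zero[OF A] submodule_zero[OF B]] by simp
next
  fix x y assume "x \<in> A + B" "y \<in> A + B"
  then obtain a b a' b' where ab: "x = a + b" "y = a' + b'" "a \<in> A" "b \<in> B" "a' \<in> A" "b' \<in> B"
    by (auto elim!: set_plus_elim)
  have "x + y = (a + a') + (b + b')" using ab(1,2) by (simp add: algebra_simps)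
  moreover have "a + a' \<in> A" "b + b' \<in> B"
    using submodule_add[OF A ab(3,5)] submodule_add[OF B ab(4,6)] .
  ultimately show "x + y \<in> A + B" by (simp add: set_plus_intro)
next
  fix r x assume "x \<in> A + B"
  then obtain a b where ab: "x = a + b" "a \<in> A" "b \<in> B" by (rule set_plus_elim)
  have "s r x = s r a + s r b" using ab(1) by (simp add: scalar_add_right)
  moreover have "s r a \<in> A" "s r b \<in> B"
    using submodule_scalar[OF A ab(2)] submodule_scalar[OF B ab(3)] .
  ultimately show "s r x \<in> A + B" by (simp add: set_plus_intro)
qed

lemma submodule_kernel: "is_hom s f \<Longrightarrow> submodule s {x. f x = 0}"
  by (simp add: submodule_def hom_zero hom_add hom_scalar)

lemma submodule_cyc: "submodule s (cyc s x)"
  unfolding submodule_def cyc_def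
  by (auto simp: scalar_add_left[symmetric] scalar_mult[symmetric] intro!: range_eqI[of _ _ 0])

lemma cyc_hom_image: "is_hom s f \<Longrightarrow> cyc s (f x) = f ` cyc s x"
  unfolding cyc_def image_image by (simp add: hom_scalar)

lemma simple_sub_eq_cyc:
  assumes S: "simple_sub s S" and v: "v \<in> S" "v \<noteq> 0"
  shows "cyc s v = S"
proof -
  have "cyc s v \<subseteq> S" using cyc_subset[OF simple_sub_submodule[OF S] v(1)] .
  moreover have "cyc s v \<noteq> {0}" using cyc_self[of v] v(2) by blast
  ultimately show ?thesis using S submodule_cyc unfolding simple_sub_def by blast
qed

lemma simple_sub_cyc_hom_image:
  assumes f: "is_hom s f" and simple: "simple_sub s (cyc s x)" and nz: "f x \<noteq> 0"
  shows "simple_sub s (cyc s (f x))"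
  unfolding simple_sub_def
proof (intro conjI allI impI)
  show "submodule s (cyc s (f x))" by (rule submodule_cyc)
  show "cyc s (f x) \<noteq> {0}" using cyc_self[of "f x"] nz by blast
  fix K assume K: "submodule s K \<and> K \<subseteq> cyc s (f x)"
  let ?P = "{v. f v \<in> K}"
  have "submodule s ?P"
    using K unfolding submodule_def by (simp add: hom_zero[OF f] hom_add[OF f] hom_scalar[OF f])
  then have "cyc s x \<inter> ?P = {0} \<or> cyc s x \<subseteq> ?P" by (rule simple_sub_Int[OF simple])
  then show "K = {0} \<or> K = cyc s (f x)"
  proof
    assume P: "cyc s x \<inter> ?P = {0}"
    have "k = 0" if "k \<in> K" for k
    proof -
      have "k \<in> f ` cyc s x" using that K unfolding cyc_hom_image[OF f, symmetric] by blast
      then obtain v where "v \<in> cyc s x" "k = f v" by blast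
      then have "v \<in> cyc s x \<inter> ?P" using that by blast
      then show "k = 0" using P \<open>k = f v\<close> hom_zero[OF f] by simp
    qed
    then have "K = {0}" using K submodule_zero[of s K] by blast
    then show ?thesis ..
  next
    assume "cyc s x \<subseteq> ?P"
    then have "cyc s (f x) \<subseteq> K" unfolding cyc_hom_image[OF f] by blast
    then have "K = cyc s (f x)" using K by (simp add: subset_antisym)
    then show ?thesis ..
  qed
qed

lemma gen_Union_cyc: "gen s (\<Union>i\<in>I. cyc s (x i)) = gen s (x ` I)"
proof
  have "cyc s (x i) \<subseteq> gen s (x ` I)" if "i \<in> I" for i
    using cyc_subset[OF submodule_gen] gen_superset[of "x ` I" s] that by blast
  then show "gen s (\<Union>i\<in>I. cyc s (x i)) \<subseteq> gen s (x ` I)"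
    by (intro gen_least[OF submodule_gen]) blast
  show "gen s (x ` I) \<subseteq> gen s (\<Union>i\<in>I. cyc s (x i))"
    using cyc_self by (intro gen_mono) blast
qed

lemma gen_Un_submodule: "submodule s S \<Longrightarrow> gen s (S \<union> A) = S + gen s A"
proof
  assume S: "submodule s S"
  have "S \<subseteq> S + gen s A"
    using set_zero_plus2[OF submodule_zero[OF submodule_gen, of s A], of S] by (simp add: add.commute)
  moreover have "gen s A \<subseteq> S + gen s A" by (rule set_zero_plus2[OF submodule_zero[OF S]])
  ultimately have "S \<union> A \<subseteq> S + gen s A" using gen_superset[of A s] by blast
  then show "gen s (S \<union> A) \<subseteq> S + gen s A"
    by (rule gen_least[OF submodule_set_plus[OF S submodule_gen]])
  show "S + gen s A \<subseteq> gen s (S \<union> A)"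
  proof
    fix v assume "v \<in> S + gen s A"
    then obtain a b where "v = a + b" "a \<in> S" "b \<in> gen s A" by (rule set_plus_elim)
    moreover have "S \<subseteq> gen s (S \<union> A)" "gen s A \<subseteq> gen s (S \<union> A)"
      using gen_superset[of "S \<union> A" s] gen_mono[of A "S \<union> A" s] by auto
    ultimately show "v \<in> gen s (S \<union> A)" using submodule_add[OF submodule_gen] by blast
  qed
qed

end

section \<open>Composition series\<close>

definition composition_series :: "('r \<Rightarrow> 'm::ab_group_add \<Rightarrow> 'm) \<Rightarrow> 'm set \<Rightarrow> nat \<Rightarrow> (nat \<Rightarrow> 'm set) \<Rightarrow> bool"
  where "composition_series s U d c \<longleftrightarrow> c 0 = {0} \<and> c d = U \<and> (\<forall>i\<le>d. submodule s (c i)) \<and>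
      (\<forall>i<d. c i \<subset> c (Suc i) \<and> \<not> (\<exists>N. submodule s N \<and> c i \<subset> N \<and> N \<subset> c (Suc i)))"

lemma comp_series_iff: "comp_series s d \<longleftrightarrow> (\<exists>c. composition_series s UNIV d c)"
  by (simp add: comp_series_def composition_series_def)

context left_module
begin

lemma composition_series_extend:
  assumes c: "composition_series s U d c" and U': "submodule s U'" "U \<subset> U'"
    and covers: "\<not> (\<exists>N. submodule s N \<and> U \<subset> N \<and> N \<subset> U')"
  shows "composition_series s U' (Suc d) (c(Suc d := U'))"
  unfolding composition_series_def
proof (intro conjI allI impI)
  show "(c(Suc d := U')) 0 = {0}" "(c(Suc d := U')) (Suc d) = U'"
    using c by (simp_all add: composition_series_def)
  fix i
  show "i \<le> Suc d \<Longrightarrow> submodule s ((c(Suc d := U')) i)"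
    using c U' by (cases "i = Suc d") (simp_all add: composition_series_def)
  assume "i < Suc d"
  then consider "i < d" | "i = d" by linarith
  then show "(c(Suc d := U')) i \<subset> (c(Suc d := U')) (Suc i)"
    and "\<not> (\<exists>N. submodule s N \<and> (c(Suc d := U')) i \<subset> N \<and> N \<subset> (c(Suc d := U')) (Suc i))"
    by (cases; use c U' covers in \<open>simp add: composition_series_def\<close>)+
qed

lemma composition_series_last:
  assumes "composition_series s U (Suc d) c"
  shows "composition_series s (c d) d c" and "c d \<subset> U"
    and "\<not> (\<exists>N. submodule s N \<and> c d \<subset> N \<and> N \<subset> U)"
proof -
  note c = assms[unfolded composition_series_def]
  show "composition_series s (c d) d c" using c by (simp add: composition_series_def)
  show "c d \<subset> U" using c by auto
  show "\<not> (\<exists>N. submodule s N \<and> c d \<subset> N \<and> N \<subset> U)" using c by (metis lessI)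
qed

lemma simple_plus_covers:
  assumes S: "simple_sub s S" and U: "submodule s U" and SU: "\<not> S \<subseteq> U"
  shows "U \<subset> S + U" and "\<not> (\<exists>N. submodule s N \<and> U \<subset> N \<and> N \<subset> S + U)"
proof -
  have Ss: "submodule s S" using S by (rule simple_sub_submodule)
  have "U \<subseteq> S + U" by (rule set_zero_plus2[OF submodule_zero[OF Ss]])
  moreover have "S \<subseteq> S + U"
    using set_zero_plus2[OF submodule_zero[OF U], of S] by (simp add: add.commute)
  ultimately show "U \<subset> S + U" using SU by blast
  show "\<not> (\<exists>N. submodule s N \<and> U \<subset> N \<and> N \<subset> S + U)"
  proof
    assume "\<exists>N. submodule s N \<and> U \<subset> N \<and> N \<subset> S + U"
    then obtain N where N: "submodule s N" "U \<subset> N" "N \<subset> S + U" by blast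
    obtain w where w: "w \<in> N" "w \<notin> U" using N(2) by blast
    then obtain a b where ab: "w = a + b" "a \<in> S" "b \<in> U"
      using N(3) by (blast elim: set_plus_elim)
    have "a = w - b" using ab(1) by simp
    then have "a \<in> N" using submodule_diff[OF N(1) w(1)] ab(3) N(2) by blast
    moreover have "a \<noteq> 0" using ab w by auto
    ultimately have "S \<subseteq> N" using simple_sub_Int[OF S N(1)] ab(2) by blast
    then have "S + U \<subseteq> N"
      using N(1,2) by (auto elim!: set_plus_elim intro: submodule_add)
    then show False using N(3) by blast
  qed
qed

lemma gen_empty: "gen s {} = {0}"
  using gen_least[OF submodule_zero_set, of "{}"] submodule_zero[OF submodule_gen, of s "{}"]
  by blast

lemma composition_series_gen_simples:
  assumes "finite \<S>" and "\<forall>S\<in>\<S>. simple_sub s S"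
  shows "\<exists>d c. d \<le> card \<S> \<and> composition_series s (gen s (\<Union>\<S>)) d c"
  using assms
proof (induction \<S> rule: finite_induct)
  case empty
  have "composition_series s (gen s {}) 0 (\<lambda>_. {0})"
    by (simp add: composition_series_def gen_empty submodule_zero_set)
  then show ?case by auto
next
  case (insert S \<S>)
  let ?U = "gen s (\<Union>\<S>)"
  obtain d c where dc: "d \<le> card \<S>" "composition_series s ?U d c"
    using insert.IH insert.prems by auto
  have S: "simple_sub s S" using insert.prems by simp
  have U': "gen s (\<Union>(insert S \<S>)) = S + ?U"
    using gen_Un_submodule[OF simple_sub_submodule[OF S]] by simp
  have card: "card (insert S \<S>) = Suc (card \<S>)" using insert.hyps by simp
  show ?case
  proof (cases "S \<subseteq> ?U")
    case True
    have "S + ?U \<subseteq> ?U"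
      using True by (auto elim!: set_plus_elim intro: submodule_add[OF submodule_gen])
    moreover have "?U \<subseteq> S + ?U"
      by (rule set_zero_plus2[OF submodule_zero[OF simple_sub_submodule[OF S]]])
    ultimately have "gen s (\<Union>(insert S \<S>)) = ?U" using U' by blast
    then show ?thesis using dc card by (metis le_SucI)
  next
    case False
    have "composition_series s (S + ?U) (Suc d) (c(Suc d := S + ?U))"
      using composition_series_extend[OF dc(2)] simple_plus_covers[OF S submodule_gen False]
        submodule_set_plus[OF simple_sub_submodule[OF S] submodule_gen] by blast
    then show ?thesis using dc card U' by (metis Suc_le_mono)
  qed
qed

lemma comp_length_le_card_simples:
  assumes "finite \<S>" and "\<forall>S\<in>\<S>. simple_sub s S" and "gen s (\<Union>\<S>) = UNIV"
  shows "comp_length s \<le> card \<S>"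
proof -
  obtain d c where d: "d \<le> card \<S>" "composition_series s UNIV d c"
    using composition_series_gen_simples[OF assms(1,2)] assms(3) by auto
  then have "comp_length s \<le> d" unfolding comp_length_def comp_series_iff by (blast intro: Least_le)
  with d(1) show ?thesis by simp
qed

lemma submodule_eq_if_Int_plus_eq:
  assumes B: "submodule s B" and B': "submodule s B'" "B \<subseteq> B'" and V: "0 \<in> V"
    and Int: "B \<inter> V = B' \<inter> V" and plus: "B + V = B' + V"
  shows "B = B'"
proof
  show "B' \<subseteq> B"
  proof
    fix w assume w: "w \<in> B'"
    have "w \<in> B' + V" using set_plus_intro[OF w V] by simp
    then obtain a v where av: "w = a + v" "a \<in> B" "v \<in> V"
      unfolding plus[symmetric] by (rule set_plus_elim)
    have "v = w - a" using av(1) by simp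
    then have "v \<in> B' \<inter> V" using submodule_diff[OF B'(1) w] av B'(2) by blast
    then show "w \<in> B" using Int av submodule_add[OF B] by blast
  qed
qed (fact B'(2))

lemma card_plus_changes_le_one:
  assumes V: "submodule s V" "V \<subset> U" and covers: "\<not> (\<exists>N. submodule s N \<and> V \<subset> N \<and> N \<subset> U)"
    and U: "submodule s U"
    and b: "\<forall>j\<le>k. submodule s (b j) \<and> b j \<subseteq> U" "\<forall>j<k. b j \<subseteq> b (Suc j)"
  shows "card {j. j < k \<and> b j + V \<noteq> b (Suc j) + V} \<le> 1"
proof -
  define P where "P j = b j + V" for j
  have P_mono: "P i \<subseteq> P j" if "i \<le> j" "j \<le> k" for i j
  proof -
    have "b i \<subseteq> b j" by (rule lift_Suc_mono_le_ivl[of "{..<k}"]) (use b(2) that in auto)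
    then show ?thesis unfolding P_def by (rule set_plus_mono2) simp
  qed
  have P_between: "V \<subseteq> P j" "P j \<subseteq> U" "submodule s (P j)" if "j \<le> k" for j
  proof -
    have bj: "submodule s (b j)" "b j \<subseteq> U" using b(1) that by auto
    show "V \<subseteq> P j" unfolding P_def by (rule set_zero_plus2[OF submodule_zero[OF bj(1)]])
    show "P j \<subseteq> U"
    proof
      fix w assume "w \<in> P j"
      then obtain a v where "w = a + v" "a \<in> b j" "v \<in> V" unfolding P_def by (rule set_plus_elim)
      then show "w \<in> U" using bj(2) V(2) submodule_add[OF U] by blast
    qed
    show "submodule s (P j)" unfolding P_def by (rule submodule_set_plus[OF bj(1) V(1)])
  qed
  have no_two: False if "i < j" "j < k" "P i \<noteq> P (Suc i)" "P j \<noteq> P (Suc j)" for i j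
  proof -
    have "V \<subseteq> P i" "P i \<subseteq> P (Suc i)" using P_between(1)[of i] P_mono[of i "Suc i"] that by auto
    then have "V \<subset> P (Suc i)" using that(3) by blast
    moreover have "P (Suc i) \<subseteq> P j" "P j \<subseteq> P (Suc j)" "P (Suc j) \<subseteq> U"
      using P_mono[of "Suc i" j] P_mono[of j "Suc j"] P_between(2)[of "Suc j"] that by auto
    then have "P (Suc i) \<subset> U" using that(4) by blast
    moreover have "submodule s (P (Suc i))" using P_between(3)[of "Suc i"] that by simp
    ultimately show False using covers by blast
  qed
  have "card {j. j < k \<and> P j \<noteq> P (Suc j)} \<le> Suc 0"
  proof (subst card_le_Suc0_iff_eq, simp, intro ballI)
    fix i j assume "i \<in> {j. j < k \<and> P j \<noteq> P (Suc j)}" "j \<in> {j. j < k \<and> P j \<noteq> P (Suc j)}"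
    then show "i = j" using no_two[of i j] no_two[of j i] by (cases i j rule: linorder_cases) auto
  qed
  then show ?thesis unfolding P_def by simp
qed

text \<open>A step of the chain survives either intersection with the maximal submodule \<open>c d\<close>
  (induction hypothesis) or addition of \<open>c d\<close>, which changes the chain at most once.\<close>

lemma card_chain_steps_le:
  assumes "composition_series s U d c"
    and "\<forall>j\<le>k. submodule s (b j) \<and> b j \<subseteq> U" and "\<forall>j<k. b j \<subseteq> b (Suc j)"
  shows "card {j. j < k \<and> b j \<noteq> b (Suc j)} \<le> d"
  using assms
proof (induction d arbitrary: U b)
  case 0
  have "U = {0}" using "0.prems"(1) unfolding composition_series_def by auto
  then have "b j = {0}" if "j \<le> k" for j
    using "0.prems"(2) submodule_zero[of s "b j"] that by blast
  then have "{j. j < k \<and> b j \<noteq> b (Suc j)} = {}" by auto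
  then show ?case by simp
next
  case (Suc d)
  let ?V = "c d"
  note last = composition_series_last[OF Suc.prems(1)]
  have V: "submodule s ?V" and U: "submodule s U"
    using Suc.prems(1) unfolding composition_series_def by auto
  let ?A = "{j. j < k \<and> b j \<inter> ?V \<noteq> b (Suc j) \<inter> ?V}"
  let ?B = "{j. j < k \<and> b j + ?V \<noteq> b (Suc j) + ?V}"
  have "\<forall>j\<le>k. submodule s (b j \<inter> ?V) \<and> b j \<inter> ?V \<subseteq> ?V"
    using Suc.prems(2) submodule_Int[OF _ V] by blast
  moreover have "\<forall>j<k. b j \<inter> ?V \<subseteq> b (Suc j) \<inter> ?V" using Suc.prems(3) by blast
  ultimately have A: "card ?A \<le> d" by (rule Suc.IH[OF last(1)])
  have B: "card ?B \<le> 1"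
    by (rule card_plus_changes_le_one[OF V last(2,3) U Suc.prems(2,3)])
  have "{j. j < k \<and> b j \<noteq> b (Suc j)} \<subseteq> ?A \<union> ?B"
  proof (intro subsetI CollectI)
    fix j assume "j \<in> {j. j < k \<and> b j \<noteq> b (Suc j)}"
    then have j: "j < k" "b j \<noteq> b (Suc j)" by auto
    have "submodule s (b j)" "submodule s (b (Suc j))" "b j \<subseteq> b (Suc j)"
      using Suc.prems(2,3) j(1) by auto
    then show "j \<in> ?A \<union> ?B"
      using submodule_eq_if_Int_plus_eq[OF _ _ _ submodule_zero[OF V]] j by blast
  qed
  then have "card {j. j < k \<and> b j \<noteq> b (Suc j)} \<le> card (?A \<union> ?B)"
    by (rule card_mono[rotated]) simp
  also have "\<dots> \<le> card ?A + card ?B" by (rule card_Un_le)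
  finally show ?case using A B by linarith
qed

lemma strict_chain_length_le:
  assumes "composition_series s U d c"
    and "\<forall>j\<le>k. submodule s (b j) \<and> b j \<subseteq> U" and "\<forall>j<k. b j \<subset> b (Suc j)"
  shows "k \<le> d"
proof -
  have "{j. j < k \<and> b j \<noteq> b (Suc j)} = {..<k}" using assms(3) by auto
  moreover have "\<forall>j<k. b j \<subseteq> b (Suc j)" using assms(3) by blast
  ultimately show ?thesis using card_chain_steps_le[OF assms(1,2)] by simp
qed

end

section \<open>Semisimple modules\<close>

context left_module
begin

lemma semisimple_simple_not_subset:
  assumes "semisimple s" and "submodule s N" and "N \<noteq> UNIV"
  obtains T where "simple_sub s T" and "\<not> T \<subseteq> N"
proof -
  have "\<not> \<Union>{T. simple_sub s T} \<subseteq> N"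
    using gen_least[OF assms(2)] assms(1,3) unfolding semisimple_def by blast
  then show ?thesis using that by blast
qed

lemma semisimple_hom_nonzero_on_simple:
  assumes "semisimple s" and f: "is_hom s f" and "f \<noteq> (\<lambda>_. 0)"
  obtains x where "simple_sub s (cyc s x)" and "f x \<noteq> 0"
proof -
  have "{x. f x = 0} \<noteq> UNIV" using assms(3) by auto
  then obtain T where T: "simple_sub s T" "\<not> T \<subseteq> {x. f x = 0}"
    using semisimple_simple_not_subset[OF assms(1) submodule_kernel[OF f]] by blast
  then obtain x where x: "x \<in> T" "f x \<noteq> 0" by blast
  then have "x \<noteq> 0" using hom_zero[OF f] by auto
  then have "cyc s x = T" using simple_sub_eq_cyc[OF T(1) x(1)] by simp
  then show ?thesis using that[of x] T(1) x(2) by simp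
qed

lemma semisimple_mem_gen_finite_simples:
  assumes ss: "semisimple s"
  obtains \<S> where "finite \<S>" "\<forall>S\<in>\<S>. simple_sub s S" "v \<in> gen s (\<Union>\<S>)"
proof -
  define good where "good \<S> \<longleftrightarrow> finite \<S> \<and> (\<forall>S\<in>\<S>. simple_sub s S)" for \<S>
  let ?T = "{v. \<exists>\<S>. good \<S> \<and> v \<in> gen s (\<Union>\<S>)}"
  have "submodule s ?T"
    unfolding submodule_def
  proof (intro conjI ballI allI)
    show "0 \<in> ?T"
      using submodule_zero[OF submodule_gen] by (auto simp: good_def intro!: exI[of _ "{}"])
  next
    fix v w assume "v \<in> ?T" "w \<in> ?T"
    then obtain \<S>1 \<S>2 where S: "good \<S>1" "v \<in> gen s (\<Union>\<S>1)" "good \<S>2" "w \<in> gen s (\<Union>\<S>2)"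
      by blast
    have "gen s (\<Union>\<S>1) \<subseteq> gen s (\<Union>(\<S>1 \<union> \<S>2))" "gen s (\<Union>\<S>2) \<subseteq> gen s (\<Union>(\<S>1 \<union> \<S>2))"
      by (simp_all add: gen_mono Sup_subset_mono)
    then have "v + w \<in> gen s (\<Union>(\<S>1 \<union> \<S>2))" using S submodule_add[OF submodule_gen] by blast
    moreover have "good (\<S>1 \<union> \<S>2)" using S(1,3) by (auto simp: good_def)
    ultimately show "v + w \<in> ?T" by (intro CollectI exI conjI)
  next
    fix r v assume "v \<in> ?T"
    then obtain \<S> where "good \<S>" "v \<in> gen s (\<Union>\<S>)" by blast
    then show "s r v \<in> ?T" using submodule_scalar[OF submodule_gen] by (intro CollectI exI conjI)
  qed
  moreover have "\<Union>{N. simple_sub s N} \<subseteq> ?T"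
  proof
    fix v assume "v \<in> \<Union>{N. simple_sub s N}"
    then obtain N where "simple_sub s N" "v \<in> N" by blast
    then have "good {N}" "v \<in> gen s (\<Union>{N})" using gen_superset[of N s] by (auto simp: good_def)
    then show "v \<in> ?T" by (intro CollectI exI conjI)
  qed
  ultimately have "gen s (\<Union>{N. simple_sub s N}) \<subseteq> ?T" by (rule gen_least)
  then have "v \<in> ?T" using ss unfolding semisimple_def by blast
  then show ?thesis using that unfolding good_def by blast
qed

lemma semisimple_finite_simples_gen:
  assumes ss: "semisimple s" and fg: "finitely_generated s"
  obtains \<S> where "finite \<S>" "\<forall>S\<in>\<S>. simple_sub s S" "gen s (\<Union>\<S>) = UNIV"
proof -
  obtain F where F: "finite F" "gen s F = UNIV" using fg unfolding finitely_generated_def by blast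
  have "\<forall>v\<in>F. \<exists>\<S>. finite \<S> \<and> (\<forall>S\<in>\<S>. simple_sub s S) \<and> v \<in> gen s (\<Union>\<S>)"
  proof
    fix v
    obtain \<S> where "finite \<S>" "\<forall>S\<in>\<S>. simple_sub s S" "v \<in> gen s (\<Union>\<S>)"
      by (rule semisimple_mem_gen_finite_simples[OF ss])
    then show "\<exists>\<S>. finite \<S> \<and> (\<forall>S\<in>\<S>. simple_sub s S) \<and> v \<in> gen s (\<Union>\<S>)" by blast
  qed
  from bchoice[OF this] obtain g
    where g: "\<forall>v\<in>F. finite (g v) \<and> (\<forall>S\<in>g v. simple_sub s S) \<and> v \<in> gen s (\<Union>(g v))" ..
  let ?\<S> = "\<Union>(g ` F)"
  have "v \<in> gen s (\<Union>?\<S>)" if "v \<in> F" for v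
  proof -
    have "\<Union>(g v) \<subseteq> \<Union>?\<S>" using that by blast
    then show ?thesis using g that gen_mono by blast
  qed
  then have "gen s F \<subseteq> gen s (\<Union>?\<S>)" by (intro gen_least[OF submodule_gen] subsetI)
  then have "gen s (\<Union>?\<S>) = UNIV" using F(2) by auto
  moreover have "finite ?\<S>" "\<forall>S\<in>?\<S>. simple_sub s S" using g F(1) by auto
  ultimately show ?thesis using that by blast
qed

lemma composition_series_comp_length:
  assumes "semisimple s" and "finitely_generated s"
  obtains c where "composition_series s UNIV (comp_length s) c"
proof -
  obtain \<S> where \<S>: "finite \<S>" "\<forall>S\<in>\<S>. simple_sub s S" "gen s (\<Union>\<S>) = UNIV"
    using semisimple_finite_simples_gen[OF assms] .
  obtain d c where "composition_series s UNIV d c"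
    using composition_series_gen_simples[OF \<S>(1,2)] \<S>(3) by auto
  then have "comp_series s d" using comp_series_iff by blast
  then have "comp_series s (comp_length s)" unfolding comp_length_def by (rule LeastI)
  then show ?thesis using that comp_series_iff by blast
qed

lemma submodule_Union_chain:
  assumes "C \<noteq> {}" and sub: "\<forall>N\<in>C. submodule s N" and chain: "\<forall>A\<in>C. \<forall>B\<in>C. A \<subseteq> B \<or> B \<subseteq> A"
  shows "submodule s (\<Union>C)"
  unfolding submodule_def
proof (intro conjI ballI allI)
  obtain N where "N \<in> C" using assms(1) by blast
  then show "0 \<in> \<Union>C" using sub submodule_zero[of s N] by blast
next
  fix v w assume "v \<in> \<Union>C" "w \<in> \<Union>C"
  then obtain A B where AB: "A \<in> C" "B \<in> C" "v \<in> A" "w \<in> B" by blast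
  have "v + w \<in> A" if "B \<subseteq> A" using AB that sub submodule_add[of s A v w] by blast
  moreover have "v + w \<in> B" if "A \<subseteq> B" using AB that sub submodule_add[of s B v w] by blast
  ultimately show "v + w \<in> \<Union>C" using AB(1,2) chain by blast
next
  fix r v assume "v \<in> \<Union>C"
  then obtain A where "A \<in> C" "v \<in> A" by blast
  then show "s r v \<in> \<Union>C" using sub submodule_scalar[of s A v r] by blast
qed

lemma maximal_submodule_Int_zero_exists:
  assumes Y: "submodule s Y"
  obtains K where "submodule s K" "K \<inter> Y = {0}"
    and "\<And>K'. submodule s K' \<Longrightarrow> K' \<inter> Y = {0} \<Longrightarrow> K \<subseteq> K' \<Longrightarrow> K' = K"
proof -
  let ?A = "{K. submodule s K \<and> K \<inter> Y = {0}}"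
  have "\<exists>U\<in>?A. \<forall>X\<in>C. X \<subseteq> U" if C: "C \<in> chains ?A" for C
  proof (cases "C = {}")
    case True
    have "{0} \<in> ?A" using submodule_zero_set submodule_zero[OF Y] by auto
    then show ?thesis using True by blast
  next
    case False
    have CA: "\<forall>N\<in>C. submodule s N \<and> N \<inter> Y = {0}" and ch: "\<forall>A\<in>C. \<forall>B\<in>C. A \<subseteq> B \<or> B \<subseteq> A"
      using C unfolding chains_def chain_subset_def by auto
    have "submodule s (\<Union>C)" using submodule_Union_chain[OF False _ ch] CA by simp
    moreover have "\<Union>C \<inter> Y = {0}"
    proof
      show "\<Union>C \<inter> Y \<subseteq> {0}" using CA by blast
      obtain N where "N \<in> C" using False by blast
      then show "{0} \<subseteq> \<Union>C \<inter> Y" using CA submodule_zero[of s N] submodule_zero[OF Y] by blast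
    qed
    ultimately show ?thesis by blast
  qed
  from Zorn_Lemma2[OF ballI[OF this]]
  obtain K where K: "K \<in> ?A" and max: "\<forall>X\<in>?A. K \<subseteq> X \<longrightarrow> X = K" by blast
  show ?thesis
  proof (rule that)
    show "submodule s K" "K \<inter> Y = {0}" using K by simp_all
    show "K' = K" if "submodule s K'" "K' \<inter> Y = {0}" "K \<subseteq> K'" for K'
      using max that by blast
  qed
qed

lemma semisimple_complement:
  assumes ss: "semisimple s" and Y: "submodule s Y"
  obtains K where "submodule s K" "K + Y = UNIV" "K \<inter> Y = {0}"
proof -
  obtain K where K: "submodule s K" "K \<inter> Y = {0}"
    and max: "\<And>K'. submodule s K' \<Longrightarrow> K' \<inter> Y = {0} \<Longrightarrow> K \<subseteq> K' \<Longrightarrow> K' = K"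
    using maximal_submodule_Int_zero_exists[OF Y] by blast
  have KY: "submodule s (K + Y)" by (rule submodule_set_plus[OF K(1) Y])
  have "K + Y = UNIV"
  proof (rule ccontr)
    assume "K + Y \<noteq> UNIV"
    then obtain T where T: "simple_sub s T" "\<not> T \<subseteq> K + Y"
      using semisimple_simple_not_subset[OF ss KY] by blast
    have T_Int: "T \<inter> (K + Y) = {0}" using simple_sub_Int[OF T(1) KY] T(2) by blast
    have Ts: "submodule s T" by (rule simple_sub_submodule[OF T(1)])
    have "(K + T) \<inter> Y \<subseteq> {0}"
    proof
      fix v assume "v \<in> (K + T) \<inter> Y"
      then obtain k t where kt: "v = k + t" "k \<in> K" "t \<in> T" "v \<in> Y"
        by (blast elim: set_plus_elim)
      have "t = - k + v" using kt(1) by (simp add: algebra_simps)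
      then have "t \<in> K + Y" using submodule_minus[OF K(1) kt(2)] kt(4) set_plus_intro by metis
      then have "t = 0" using T_Int kt(3) by blast
      then show "v \<in> {0}" using kt K(2) by auto
    qed
    moreover have "0 \<in> (K + T) \<inter> Y"
      using submodule_zero[OF submodule_set_plus[OF K(1) Ts]] submodule_zero[OF Y] by blast
    ultimately have "(K + T) \<inter> Y = {0}" by blast
    moreover have "K \<subseteq> K + T"
      using set_zero_plus2[OF submodule_zero[OF Ts], of K] by (simp add: add.commute)
    ultimately have "K + T = K" by (rule max[OF submodule_set_plus[OF K(1) Ts]])
    moreover have "T \<subseteq> K + T" by (rule set_zero_plus2[OF submodule_zero[OF K(1)]])
    moreover have "K \<subseteq> K + Y"
      using set_zero_plus2[OF submodule_zero[OF Y], of K] by (simp add: add.commute)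
    ultimately show False using T(2) by blast
  qed
  then show ?thesis using that K by blast
qed

lemma complement_projection:
  assumes K: "submodule s K" and Y: "submodule s Y" and KY: "K + Y = UNIV" "K \<inter> Y = {0}"
  obtains p where "is_hom s p" "\<And>v. p v \<in> Y" "\<And>v. v - p v \<in> K"
    "\<And>v w. w \<in> Y \<Longrightarrow> v - w \<in> K \<Longrightarrow> p v = w"
proof -
  have unique: "w1 = w2" if "w1 \<in> Y" "v - w1 \<in> K" "w2 \<in> Y" "v - w2 \<in> K" for v w1 w2
  proof -
    have "w1 - w2 \<in> Y" using submodule_diff[OF Y] that by blast
    moreover have "(v - w2) - (v - w1) \<in> K" using submodule_diff[OF K] that by blast
    ultimately have "w1 - w2 \<in> K \<inter> Y" by simp
    then show ?thesis using KY(2) by simp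
  qed
  have "\<exists>w. w \<in> Y \<and> v - w \<in> K" for v
  proof -
    have "v \<in> K + Y" using KY(1) by simp
    then obtain k w where "v = k + w" "k \<in> K" "w \<in> Y" by (rule set_plus_elim)
    then show ?thesis by (intro exI[of _ w]) simp
  qed
  then obtain p where p: "\<And>v. p v \<in> Y \<and> v - p v \<in> K" by metis
  have eq: "p v = w" if "w \<in> Y" "v - w \<in> K" for v w
    using unique[of "p v" v w] p[of v] that by blast
  have "is_hom s p"
    unfolding is_hom_def
  proof (intro conjI allI)
    fix v w
    have "(v + w) - (p v + p w) = (v - p v) + (w - p w)" by simp
    then have "(v + w) - (p v + p w) \<in> K" using p submodule_add[OF K] by metis
    then show "p (v + w) = p v + p w" using eq p submodule_add[OF Y] by blast
  next
    fix r v
    have "s r v - s r (p v) = s r (v - p v)" by (simp add: scalar_diff_right)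
    then have "s r v - s r (p v) \<in> K" using p submodule_scalar[OF K] by metis
    then show "p (s r v) = s r (p v)" using eq p submodule_scalar[OF Y] by blast
  qed
  then show ?thesis using that p eq by blast
qed

end

section \<open>Nilpotent endomorphisms\<close>

lemma funpow_eq_zero_ge:
  fixes f :: "'a \<Rightarrow> 'a::zero"
  assumes "f ^^ n = (\<lambda>_. 0)" and "n \<le> p"
  shows "(f ^^ p) a = 0"
proof -
  have "(f ^^ p) a = (f ^^ n) ((f ^^ (p - n)) a)"
    using assms(2) by (metis funpow_add le_add_diff_inverse comp_apply)
  then show ?thesis using assms(1) by simp
qed

lemma exists_funpow_last_nonzero:
  fixes f :: "'a \<Rightarrow> 'a::zero"
  assumes nil: "f ^^ n = (\<lambda>_. 0)" and nz: "(f ^^ k) a \<noteq> 0"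
  shows "\<exists>p\<ge>k. (f ^^ p) a \<noteq> 0 \<and> (f ^^ Suc p) a = 0"
proof (rule ccontr)
  assume "\<not> ?thesis"
  then have step: "(f ^^ Suc p) a \<noteq> 0" if "k \<le> p" "(f ^^ p) a \<noteq> 0" for p
    using that by blast
  have "(f ^^ (k + i)) a \<noteq> 0" for i
    by (induction i) (use nz step in auto)
  then show False using funpow_eq_zero_ge[OF nil, of "k + n" a] by simp
qed

lemma funpow_mem_invariant: "f ` A \<subseteq> A \<Longrightarrow> a \<in> A \<Longrightarrow> (f ^^ j) a \<in> A"
  by (induction j) auto

lemma End_ring_simps [simp]:
  "carrier (End_ring s) = {f. is_hom s f}" "mult (End_ring s) = (\<circ>)"
  "one (End_ring s) = id" "zero (End_ring s) = (\<lambda>_. 0)"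
  by (simp_all add: End_ring_def)

lemma nat_pow_End_ring: "f [^]\<^bsub>End_ring s\<^esub> (n::nat) = f ^^ n"
  by (induct n) (simp_all add: nat_pow_def End_ring_def funpow_swap1 comp_def)

lemma nilpotent_elem_End_ring_iff:
  "nilpotent_elem (End_ring s) f \<longleftrightarrow> is_hom s f \<and> (\<exists>n. f ^^ n = (\<lambda>_. 0))"
  by (simp add: nilpotent_elem_def nat_pow_End_ring)

lemma decomposable_nilpotent_End_ring_iff:
  "decomposable_nilpotent (End_ring s) f \<longleftrightarrow> nilpotent_elem (End_ring s) f \<and>
     (\<exists>e. is_hom s e \<and> e \<circ> e = e \<and> e \<noteq> (\<lambda>_. 0) \<and> e \<noteq> id \<and> e \<circ> f = f \<circ> e)"
  by (auto simp: decomposable_nilpotent_def)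

context left_module
begin

lemma funpow_vanishes_on_proper_invariant_submodule:
  assumes comp: "composition_series s UNIV d c" and hom: "is_hom s \<phi>" and nil: "\<phi> ^^ n = (\<lambda>_. 0)"
    and A: "submodule s A" "\<phi> ` A \<subseteq> A" "A \<noteq> UNIV" and a: "a \<in> A"
  shows "(\<phi> ^^ (d - 1)) a = 0"
proof (rule ccontr)
  assume nz: "(\<phi> ^^ (d - 1)) a \<noteq> 0"
  obtain p where p: "d - 1 \<le> p" "(\<phi> ^^ p) a \<noteq> 0" "(\<phi> ^^ Suc p) a = 0"
    using exists_funpow_last_nonzero[OF nil nz] by blast
  have d: "d \<noteq> 0"
  proof
    assume "d = 0"
    then have "(UNIV :: 'm set) = {0}" using comp unfolding composition_series_def by auto
    then show False using p(2) by blast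
  qed
  define b where "b j = (if j \<le> d then A \<inter> {v. (\<phi> ^^ j) v = 0} else UNIV)" for j
  have "\<forall>j\<le>Suc d. submodule s (b j) \<and> b j \<subseteq> UNIV"
    using submodule_Int[OF A(1) submodule_kernel[OF hom_funpow[OF hom]]] submodule_UNIV[of s]
    by (simp add: b_def)
  moreover have "b j \<subset> b (Suc j)" if j: "j < Suc d" for j
  proof (cases "j = d")
    case True
    then show ?thesis using A(3) by (auto simp: b_def)
  next
    case False
    then have jd: "j < d" using j by simp
    have "b j \<subseteq> b (Suc j)" using jd hom_zero[OF hom] by (auto simp: b_def)
    moreover
    define w where "w = (\<phi> ^^ (p - j)) a"
    have "w \<in> A" unfolding w_def by (rule funpow_mem_invariant[OF A(2) a])
    moreover have "(\<phi> ^^ j) w = (\<phi> ^^ p) a" "(\<phi> ^^ Suc j) w = (\<phi> ^^ Suc p) a"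
      using jd p(1) d by (simp_all add: w_def funpow_add[symmetric, THEN fun_cong, simplified])
    ultimately have "w \<in> b (Suc j)" "w \<notin> b j" using jd p(2,3) by (simp_all add: b_def)
    then show ?thesis using \<open>b j \<subseteq> b (Suc j)\<close> by blast
  qed
  ultimately have "Suc d \<le> d" using strict_chain_length_le[OF comp] by blast
  then show False by simp
qed

lemma funpow_eq_zero_if_commuting_idempotent:
  assumes c: "composition_series s UNIV d c" and hom: "is_hom s \<phi>" and nil: "\<phi> ^^ n = (\<lambda>_. 0)"
    and e: "is_hom s e" "e \<noteq> (\<lambda>_. 0)" "e \<noteq> id"
    and idem: "\<And>v. e (e v) = e v" and comm: "\<And>v. e (\<phi> v) = \<phi> (e v)"
  shows "(\<phi> ^^ (d - 1)) v = 0"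
proof -
  have "(\<phi> ^^ (d - 1)) (e v) = 0"
  proof (rule funpow_vanishes_on_proper_invariant_submodule[OF c hom nil submodule_range[OF e(1)]])
    show "\<phi> ` range e \<subseteq> range e" using comm by (auto simp: image_iff) (metis rangeI)
    show "range e \<noteq> UNIV"
    proof
      assume "range e = UNIV"
      then have "e w = w" for w using idem by (metis UNIV_I imageE)
      then show False using e(3) by auto
    qed
  qed simp
  moreover have "(\<phi> ^^ (d - 1)) (v - e v) = 0"
  proof (rule funpow_vanishes_on_proper_invariant_submodule[OF c hom nil submodule_kernel[OF e(1)]])
    show "\<phi> ` {v. e v = 0} \<subseteq> {v. e v = 0}" using comm hom_zero[OF hom] by auto
    show "{v. e v = 0} \<noteq> UNIV" using e(2) by auto
    show "v - e v \<in> {v. e v = 0}" using hom_diff[OF e(1)] idem by simp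
  qed
  ultimately show ?thesis
    using hom_add[OF hom_funpow[OF hom], of "d - 1" "e v" "v - e v"] by simp
qed

lemma indecomposable_if_funpow_comp_length_nonzero:
  assumes ss: "semisimple s" and fg: "finitely_generated s" and hom: "is_hom s \<phi>"
    and nil: "\<phi> ^^ n = (\<lambda>_. 0)" and top: "\<phi> ^^ (comp_length s - 1) \<noteq> (\<lambda>_. 0)"
  shows "indecomposable_nilpotent (End_ring s) \<phi>"
proof -
  obtain c where c: "composition_series s UNIV (comp_length s) c"
    using composition_series_comp_length[OF ss fg] .
  have "\<not> (\<exists>e. is_hom s e \<and> e \<circ> e = e \<and> e \<noteq> (\<lambda>_. 0) \<and> e \<noteq> id \<and> e \<circ> \<phi> = \<phi> \<circ> e)"
  proof
    assume "\<exists>e. is_hom s e \<and> e \<circ> e = e \<and> e \<noteq> (\<lambda>_. 0) \<and> e \<noteq> id \<and> e \<circ> \<phi> = \<phi> \<circ> e"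
    then obtain e where e: "is_hom s e" "e \<noteq> (\<lambda>_. 0)" "e \<noteq> id"
      and idem: "\<And>v. e (e v) = e v" and comm: "\<And>v. e (\<phi> v) = \<phi> (e v)"
      by (metis comp_apply)
    have "(\<phi> ^^ (comp_length s - 1)) v = 0" for v
      by (rule funpow_eq_zero_if_commuting_idempotent[OF c hom nil e idem comm])
    then show False using top by auto
  qed
  then show ?thesis
    using hom nil
    by (auto simp: indecomposable_nilpotent_def decomposable_nilpotent_End_ring_iff
        nilpotent_elem_End_ring_iff)
qed

lemma single_block_jordan_base_imp_length:
  assumes hom: "is_hom s \<phi>" and J: "nilpotent_jordan_base s \<phi> (UNIV :: unit set) k x"
  shows "finitely_generated s" and "\<phi> ^^ (comp_length s - 1) \<noteq> (\<lambda>_. 0)"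
proof -
  let ?n = "k ()" and ?x = "x ()"
  have n: "1 \<le> ?n" and simple: "\<And>i. i \<in> {1..?n} \<Longrightarrow> simple_sub s (cyc s (?x i))"
    and step: "\<And>i. 1 \<le> i \<Longrightarrow> i < ?n \<Longrightarrow> \<phi> (?x i) = ?x (Suc i)"
    and "gen s (\<Union>p\<in>UNIV \<times> {1..?n}. case p of (\<gamma>, i) \<Rightarrow> cyc s (x \<gamma> i)) = UNIV"
    using J unfolding nilpotent_jordan_base_def direct_sum_def by auto
  moreover have "(\<Union>p\<in>UNIV \<times> {1..?n}. case p of (\<gamma>, i) \<Rightarrow> cyc s (x \<gamma> i)) = (\<Union>i\<in>{1..?n}. cyc s (?x i))"
    by auto
  ultimately have gen: "gen s (\<Union>i\<in>{1..?n}. cyc s (?x i)) = UNIV" by simp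
  then show "finitely_generated s"
    unfolding finitely_generated_def gen_Union_cyc by blast
  let ?\<S> = "(\<lambda>i. cyc s (?x i)) ` {1..?n}"
  have "comp_length s \<le> card ?\<S>"
    by (rule comp_length_le_card_simples) (use simple gen in auto)
  also have "card ?\<S> \<le> ?n" using card_image_le[of "{1..?n}" "\<lambda>i. cyc s (?x i)"] by simp
  finally have len: "comp_length s \<le> ?n" .
  have orbit: "(\<phi> ^^ j) (?x 1) = ?x (Suc j)" if "j < ?n" for j
    using that by (induction j) (simp_all add: step)
  have "?x ?n \<noteq> 0"
  proof
    assume "?x ?n = 0"
    then have "cyc s (?x ?n) = {0}" by (auto simp: cyc_def)
    then show False using simple[of ?n] n unfolding simple_sub_def by simp
  qed
  then have "(\<phi> ^^ (?n - 1)) (?x 1) \<noteq> 0" using orbit[of "?n - 1"] n by simp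
  then show "\<phi> ^^ (comp_length s - 1) \<noteq> (\<lambda>_. 0)"
    using funpow_eq_zero_ge[where f = \<phi> and n = "comp_length s - 1" and p = "?n - 1"] len by auto
qed

end

section \<open>The Jordan chain of an indecomposable nilpotent endomorphism\<close>

locale nilpotent_top_projection = left_module s for s :: "'r::ring_1 \<Rightarrow> 'm::ab_group_add \<Rightarrow> 'm" +
  fixes \<phi> :: "'m \<Rightarrow> 'm" and x :: 'm and m :: nat and \<pi> :: "'m \<Rightarrow> 'm"
  assumes hom: "is_hom s \<phi>"
    and simple: "simple_sub s (cyc s x)"
    and nil: "\<phi> ^^ m = (\<lambda>_. 0)"
    and top: "(\<phi> ^^ (m - 1)) x \<noteq> 0"
    and proj_hom: "is_hom s \<pi>"
    and proj_range: "\<pi> v \<in> cyc s ((\<phi> ^^ (m - 1)) x)"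
    and proj_id: "w \<in> cyc s ((\<phi> ^^ (m - 1)) x) \<Longrightarrow> \<pi> w = w"
begin

definition chain_comb :: "(nat \<Rightarrow> 'm) \<Rightarrow> 'm"
  where "chain_comb z = (\<Sum>i<m. (\<phi> ^^ i) (z i))"

definition chain_span :: "'m set"
  where "chain_span = {chain_comb z | z. range z \<subseteq> cyc s x}"

definition stable_kernel :: "'m set"
  where "stable_kernel = {v. \<forall>j. \<pi> ((\<phi> ^^ j) v) = 0}"

lemma hom_funpow_phi: "is_hom s (\<phi> ^^ j)"
  by (rule hom_funpow[OF hom])

lemma m_pos: "0 < m"
proof (rule ccontr)
  assume "\<not> 0 < m"
  then have "(\<phi> ^^ (m - 1)) x = (\<phi> ^^ m) x" by simp
  then show False using top nil by simp
qed

lemma funpow_ge_nilpotency: "m \<le> j \<Longrightarrow> (\<phi> ^^ j) v = 0"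
  by (rule funpow_eq_zero_ge[OF nil])

lemma eq_zero_if_funpow_top_eq_zero:
  assumes z: "z \<in> cyc s x" and "(\<phi> ^^ (m - 1)) z = 0"
  shows "z = 0"
proof (rule ccontr)
  assume "z \<noteq> 0"
  then have "x \<in> cyc s z" using simple_sub_eq_cyc[OF simple z] cyc_self by simp
  then obtain r where "x = s r z" by (auto simp: cyc_def)
  then have "(\<phi> ^^ (m - 1)) x = s r ((\<phi> ^^ (m - 1)) z)" by (simp add: hom_scalar[OF hom_funpow_phi])
  then show False using top assms(2) by simp
qed

lemma funpow_x_nonzero:
  assumes "j < m"
  shows "(\<phi> ^^ j) x \<noteq> 0"
proof
  assume "(\<phi> ^^ j) x = 0"
  moreover have "(\<phi> ^^ (m - 1 - j + j)) x = (\<phi> ^^ (m - 1 - j)) ((\<phi> ^^ j) x)"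
    by (simp add: funpow_add)
  ultimately show False using top assms hom_zero[OF hom_funpow_phi] by simp
qed

lemma funpow_sum_terms: "(\<phi> ^^ k) (\<Sum>i\<in>I. (\<phi> ^^ i) (z i)) = (\<Sum>i\<in>I. (\<phi> ^^ (k + i)) (z i))"
  by (simp add: hom_sum[OF hom_funpow_phi] funpow_add)

lemma chain_comb_in_stable_kernel_imp_zero:
  assumes z: "range z \<subseteq> cyc s x" and C: "chain_comb z \<in> stable_kernel"
  shows "i < m \<Longrightarrow> z i = 0"
proof (induction i rule: less_induct)
  case (less i)
  have "(\<phi> ^^ (m - 1 - i)) (chain_comb z) = (\<Sum>j<m. (\<phi> ^^ (m - 1 - i + j)) (z j))"
    unfolding chain_comb_def by (rule funpow_sum_terms)
  also have "\<dots> = (\<phi> ^^ (m - 1 - i + i)) (z i) + (\<Sum>j\<in>{..<m} - {i}. (\<phi> ^^ (m - 1 - i + j)) (z j))"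
    by (rule sum.remove) (use less.prems in auto)
  also have "(\<Sum>j\<in>{..<m} - {i}. (\<phi> ^^ (m - 1 - i + j)) (z j)) = 0"
  proof (rule sum.neutral, rule ballI)
    fix j assume "j \<in> {..<m} - {i}"
    then consider "j < i" | "i < j" "j < m" by fastforce
    then show "(\<phi> ^^ (m - 1 - i + j)) (z j) = 0"
    proof cases
      case 1
      then show ?thesis using less.IH less.prems hom_zero[OF hom_funpow_phi] by simp
    next
      case 2
      then show ?thesis using funpow_ge_nilpotency by simp
    qed
  qed
  also have "m - 1 - i + i = m - 1" using less.prems by simp
  finally have eq: "(\<phi> ^^ (m - 1 - i)) (chain_comb z) = (\<phi> ^^ (m - 1)) (z i)" by simp
  have "(\<phi> ^^ (m - 1)) (z i) \<in> cyc s ((\<phi> ^^ (m - 1)) x)"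
    using z cyc_hom_image[OF hom_funpow_phi, of "m - 1" x] by blast
  moreover have "\<pi> ((\<phi> ^^ (m - 1)) (z i)) = 0"
    using C unfolding stable_kernel_def eq[symmetric] by blast
  ultimately have "(\<phi> ^^ (m - 1)) (z i) = 0" using proj_id by simp
  then show "z i = 0" using eq_zero_if_funpow_top_eq_zero z by blast
qed

text \<open>Back substitution: \<open>z t\<close> is chosen to kill the projection of \<open>\<phi>\<^sup>m\<^sup>-\<^sup>1\<^sup>-\<^sup>t\<close>, without
  disturbing the higher powers already treated.\<close>

lemma chain_comb_approximation:
  assumes "t \<le> m"
  shows "\<exists>z. range z \<subseteq> cyc s x \<and>
           (\<forall>j\<ge>m - t. \<pi> ((\<phi> ^^ j) (v - (\<Sum>i<t. (\<phi> ^^ i) (z i)))) = 0)"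
  using assms
proof (induction t)
  case 0
  have "\<pi> ((\<phi> ^^ j) v) = 0" if "m \<le> j" for j
    using funpow_ge_nilpotency[OF that] hom_zero[OF proj_hom] by simp
  then show ?case using submodule_zero[OF submodule_cyc] by (intro exI[of _ "\<lambda>_. 0"]) auto
next
  case (Suc t)
  then obtain z where z: "range z \<subseteq> cyc s x"
    and IH: "\<And>j. m - t \<le> j \<Longrightarrow> \<pi> ((\<phi> ^^ j) (v - (\<Sum>i<t. (\<phi> ^^ i) (z i)))) = 0" by auto
  define w where "w = v - (\<Sum>i<t. (\<phi> ^^ i) (z i))"
  have "\<pi> ((\<phi> ^^ (m - Suc t)) w) \<in> (\<phi> ^^ (m - 1)) ` cyc s x"
    using proj_range unfolding cyc_hom_image[OF hom_funpow_phi] .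
  then obtain z' where z': "z' \<in> cyc s x" "(\<phi> ^^ (m - 1)) z' = \<pi> ((\<phi> ^^ (m - Suc t)) w)" by auto
  define z2 where "z2 = z(t := z')"
  have range: "range z2 \<subseteq> cyc s x" using z z'(1) by (auto simp: z2_def)
  have "(\<Sum>i<Suc t. (\<phi> ^^ i) (z2 i)) = (\<Sum>i<t. (\<phi> ^^ i) (z i)) + (\<phi> ^^ t) z'"
    by (simp add: z2_def)
  then have diff: "v - (\<Sum>i<Suc t. (\<phi> ^^ i) (z2 i)) = w - (\<phi> ^^ t) z'"
    by (simp add: w_def algebra_simps)
  have "\<pi> ((\<phi> ^^ j) (w - (\<phi> ^^ t) z')) = 0" if j: "m - Suc t \<le> j" for j
  proof -
    have split: "\<pi> ((\<phi> ^^ j) (w - (\<phi> ^^ t) z')) = \<pi> ((\<phi> ^^ j) w) - \<pi> ((\<phi> ^^ (j + t)) z')"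
      by (simp add: hom_diff[OF hom_funpow_phi] hom_diff[OF proj_hom] funpow_add)
    show ?thesis
    proof (cases "j = m - Suc t")
      case True
      then have "j + t = m - 1" using Suc.prems by simp
      moreover have "(\<phi> ^^ (m - 1)) z' \<in> cyc s ((\<phi> ^^ (m - 1)) x)"
        using z'(1) cyc_hom_image[OF hom_funpow_phi, of "m - 1" x] by blast
      ultimately show ?thesis using split z'(2) proj_id True by simp
    next
      case False
      then have "m - t \<le> j" "m \<le> j + t" using j Suc.prems by auto
      then show ?thesis
        using split IH[unfolded w_def[symmetric]] funpow_ge_nilpotency hom_zero[OF proj_hom] by simp
    qed
  qed
  then show ?case using range diff by (intro exI[of _ z2]) simp
qed

lemma exists_chain_comb_diff_in_stable_kernel:
  "\<exists>z. range z \<subseteq> cyc s x \<and> v - chain_comb z \<in> stable_kernel"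
proof -
  obtain z where "range z \<subseteq> cyc s x" "\<forall>j\<ge>m - m. \<pi> ((\<phi> ^^ j) (v - chain_comb z)) = 0"
    using chain_comb_approximation[of m v] unfolding chain_comb_def by blast
  then show ?thesis unfolding stable_kernel_def by auto
qed

lemma submodule_stable_kernel: "submodule s stable_kernel"
  unfolding submodule_def stable_kernel_def
  by (simp add: hom_zero[OF hom_funpow_phi] hom_add[OF hom_funpow_phi] hom_scalar[OF hom_funpow_phi]
      hom_zero[OF proj_hom] hom_add[OF proj_hom] hom_scalar[OF proj_hom])

lemma stable_kernel_invariant: "\<phi> ` stable_kernel \<subseteq> stable_kernel"
proof (rule image_subsetI)
  fix v assume v: "v \<in> stable_kernel"
  have "\<pi> ((\<phi> ^^ Suc j) v) = 0" for j using v unfolding stable_kernel_def by blast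
  then have "\<pi> ((\<phi> ^^ j) (\<phi> v)) = 0" for j by (simp only: funpow_Suc_right comp_apply)
  then show "\<phi> v \<in> stable_kernel" unfolding stable_kernel_def by blast
qed

lemma chain_comb_add: "chain_comb z + chain_comb z' = chain_comb (\<lambda>i. z i + z' i)"
  by (simp add: chain_comb_def hom_add[OF hom_funpow_phi] sum.distrib)

lemma chain_comb_scalar: "s r (chain_comb z) = chain_comb (\<lambda>i. s r (z i))"
  by (simp add: chain_comb_def scalar_sum_right hom_scalar[OF hom_funpow_phi])

lemma submodule_chain_span: "submodule s chain_span"
  unfolding submodule_def chain_span_def
proof (intro conjI ballI allI)
  have "0 = chain_comb (\<lambda>_. 0)" by (simp add: chain_comb_def hom_zero[OF hom_funpow_phi])
  moreover have "range (\<lambda>_. 0) \<subseteq> cyc s x" using submodule_zero[OF submodule_cyc] by blast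
  ultimately show "0 \<in> {chain_comb z |z. range z \<subseteq> cyc s x}" by blast
next
  fix a b assume "a \<in> {chain_comb z |z. range z \<subseteq> cyc s x}" "b \<in> {chain_comb z |z. range z \<subseteq> cyc s x}"
  then obtain z z' where z: "a = chain_comb z" "range z \<subseteq> cyc s x" "b = chain_comb z'" "range z' \<subseteq> cyc s x"
    by blast
  have "a + b = chain_comb (\<lambda>i. z i + z' i)" using z(1,3) chain_comb_add by simp
  moreover have "range (\<lambda>i. z i + z' i) \<subseteq> cyc s x"
    using z(2,4) submodule_add[OF submodule_cyc] by blast
  ultimately show "a + b \<in> {chain_comb z |z. range z \<subseteq> cyc s x}" by blast
next
  fix r a assume "a \<in> {chain_comb z |z. range z \<subseteq> cyc s x}"
  then obtain z where z: "a = chain_comb z" "range z \<subseteq> cyc s x" by blast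
  have "s r a = chain_comb (\<lambda>i. s r (z i))" using z(1) chain_comb_scalar by simp
  moreover have "range (\<lambda>i. s r (z i)) \<subseteq> cyc s x" using z(2) submodule_scalar[OF submodule_cyc] by blast
  ultimately show "s r a \<in> {chain_comb z |z. range z \<subseteq> cyc s x}" by blast
qed

lemma chain_comb_eq_zero_imp_zero:
  assumes "range z \<subseteq> cyc s x" and "chain_comb z = 0" and "i < m"
  shows "z i = 0"
proof -
  have "chain_comb z \<in> stable_kernel"
    unfolding assms(2) by (rule submodule_zero[OF submodule_stable_kernel])
  then show ?thesis using chain_comb_in_stable_kernel_imp_zero[OF assms(1)] assms(3) by blast
qed

lemma phi_chain_comb: "\<phi> (chain_comb z) = chain_comb (\<lambda>i. if i = 0 then 0 else z (i - 1))"
proof -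
  obtain m' where m': "m = Suc m'" using m_pos by (cases m) auto
  have "\<phi> (chain_comb z) = (\<Sum>i<m. (\<phi> ^^ Suc i) (z i))"
    unfolding chain_comb_def by (simp add: hom_sum[OF hom])
  also have "\<dots> = (\<Sum>i<m'. (\<phi> ^^ Suc i) (z i))"
    using funpow_ge_nilpotency[of m "z m'"] by (simp add: m')
  also have "\<dots> = (\<Sum>i<m. (\<phi> ^^ i) (if i = 0 then 0 else z (i - 1)))"
    unfolding m' sum.lessThan_Suc_shift by (simp add: hom_zero[OF hom])
  also have "\<dots> = chain_comb (\<lambda>i. if i = 0 then 0 else z (i - 1))"
    by (simp only: chain_comb_def)
  finally show ?thesis .
qed

lemma chain_span_invariant: "\<phi> ` chain_span \<subseteq> chain_span"
proof (rule image_subsetI)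
  fix v assume "v \<in> chain_span"
  then obtain z where z: "v = chain_comb z" "range z \<subseteq> cyc s x" unfolding chain_span_def by blast
  have "range (\<lambda>i. if i = 0 then 0 else z (i - 1)) \<subseteq> cyc s x"
    using z(2) submodule_zero[OF submodule_cyc] by auto
  then show "\<phi> v \<in> chain_span" unfolding chain_span_def z(1) phi_chain_comb by blast
qed

lemma x_mem_chain_span: "x \<in> chain_span"
proof -
  obtain m' where m': "m = Suc m'" using m_pos by (cases m) auto
  have "(\<Sum>i<m. (\<phi> ^^ i) (if i = 0 then x else 0)) = x"
    unfolding m' sum.lessThan_Suc_shift by (simp add: hom_zero[OF hom_funpow_phi] hom_zero[OF hom])
  then have eq: "x = chain_comb (\<lambda>i. if i = 0 then x else 0)" by (simp only: chain_comb_def)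
  have rng: "range (\<lambda>i. if i = 0 then x else 0) \<subseteq> cyc s x"
    using cyc_self submodule_zero[OF submodule_cyc] by auto
  show ?thesis unfolding chain_span_def using eq rng by blast
qed

lemma chain_span_Int_stable_kernel: "chain_span \<inter> stable_kernel = {0}"
proof
  show "chain_span \<inter> stable_kernel \<subseteq> {0}"
  proof
    fix v assume "v \<in> chain_span \<inter> stable_kernel"
    then obtain z where z: "v = chain_comb z" "range z \<subseteq> cyc s x" "chain_comb z \<in> stable_kernel"
      unfolding chain_span_def by blast
    then have "\<forall>i<m. z i = 0" using chain_comb_in_stable_kernel_imp_zero by blast
    then have "chain_comb z = 0" unfolding chain_comb_def by (simp add: hom_zero[OF hom_funpow_phi])
    then show "v \<in> {0}" using z(1) by simp
  qed
  show "{0} \<subseteq> chain_span \<inter> stable_kernel"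
    using submodule_zero[OF submodule_chain_span] submodule_zero[OF submodule_stable_kernel] by simp
qed

lemma chain_span_plus_stable_kernel: "chain_span + stable_kernel = UNIV"
proof -
  have "v \<in> chain_span + stable_kernel" for v
  proof -
    obtain z where z: "range z \<subseteq> cyc s x" "v - chain_comb z \<in> stable_kernel"
      using exists_chain_comb_diff_in_stable_kernel by blast
    then have "chain_comb z \<in> chain_span" unfolding chain_span_def by blast
    then have "chain_comb z + (v - chain_comb z) \<in> chain_span + stable_kernel"
      using z(2) by (rule set_plus_intro)
    then show ?thesis by simp
  qed
  then show ?thesis by blast
qed

lemma decomposable_if_stable_kernel_nonzero:
  assumes "stable_kernel \<noteq> {0}"
  shows "decomposable_nilpotent (End_ring s) \<phi>"
proof -
  obtain e where e: "is_hom s e" "\<And>v. e v \<in> stable_kernel" "\<And>v. v - e v \<in> chain_span"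
    and unique: "\<And>v w. w \<in> stable_kernel \<Longrightarrow> v - w \<in> chain_span \<Longrightarrow> e v = w"
    using complement_projection[OF submodule_chain_span submodule_stable_kernel
        chain_span_plus_stable_kernel chain_span_Int_stable_kernel] by blast
  have e_id: "e w = w" if "w \<in> stable_kernel" for w
    using unique[OF that] submodule_zero[OF submodule_chain_span] by simp
  have "e \<circ> e = e" using e_id e(2) by auto
  moreover have "e \<circ> \<phi> = \<phi> \<circ> e"
  proof
    fix v
    have "\<phi> (e v) \<in> stable_kernel" using stable_kernel_invariant e(2) by blast
    moreover have "\<phi> v - \<phi> (e v) \<in> chain_span"
      using chain_span_invariant e(3)[of v] hom_diff[OF hom, of v "e v"] by auto
    ultimately show "(e \<circ> \<phi>) v = (\<phi> \<circ> e) v" using unique by simp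
  qed
  moreover have "e \<noteq> (\<lambda>_. 0)"
  proof
    assume "e = (\<lambda>_. 0)"
    moreover obtain c where "c \<in> stable_kernel" "c \<noteq> 0"
      using assms submodule_zero[OF submodule_stable_kernel] by blast
    ultimately show False using e_id by auto
  qed
  moreover have "e \<noteq> id"
  proof
    assume "e = id"
    moreover have "e x = 0"
      using unique[of 0 x] submodule_zero[OF submodule_stable_kernel] x_mem_chain_span by simp
    ultimately show False using funpow_x_nonzero[OF m_pos] by simp
  qed
  moreover have "nilpotent_elem (End_ring s) \<phi>"
    using hom nil by (auto simp: nilpotent_elem_End_ring_iff)
  ultimately show ?thesis using e(1) by (auto simp: decomposable_nilpotent_End_ring_iff)
qed

lemma chain_sum_reindex:
  assumes "finite F" "F \<subseteq> UNIV \<times> {1..m}"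
  shows "sum f F = (\<Sum>k<m. if ((), Suc k) \<in> F then f ((), Suc k) else 0)"
proof -
  have "sum f F = (\<Sum>p\<in>UNIV \<times> {1..m}. if p \<in> F then f p else 0)"
    by (rule sum.mono_neutral_cong_left) (use assms in auto)
  also have "\<dots> = (\<Sum>k<m. if ((), Suc k) \<in> F then f ((), Suc k) else 0)"
  proof (rule sum.reindex_bij_betw[symmetric])
    show "bij_betw (\<lambda>k. ((), Suc k)) {..<m} (UNIV \<times> {1..m})"
      by (rule bij_betw_byWitness[where f' = "\<lambda>p. snd p - 1"]) auto
  qed
  finally show ?thesis .
qed

definition chain_piece :: "unit \<times> nat \<Rightarrow> 'm set"
  where "chain_piece p = cyc s ((\<phi> ^^ (snd p - 1)) x)"

lemma chain_piece_Suc: "chain_piece ((), Suc k) = (\<phi> ^^ k) ` cyc s x"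
  using cyc_hom_image[OF hom_funpow_phi, of k x] by (simp add: chain_piece_def)

lemma chain_span_subset_gen_pieces: "chain_span \<subseteq> gen s (\<Union>(chain_piece ` (UNIV \<times> {1..m})))"
proof
  fix v assume "v \<in> chain_span"
  then obtain z where z: "v = chain_comb z" "range z \<subseteq> cyc s x"
    unfolding chain_span_def by blast
  have "(\<phi> ^^ k) (z k) \<in> gen s (\<Union>(chain_piece ` (UNIV \<times> {1..m})))" if "k < m" for k
  proof -
    have "(\<phi> ^^ k) (z k) \<in> chain_piece ((), Suc k)" using z(2) chain_piece_Suc[of k] by blast
    moreover have "((), Suc k) \<in> UNIV \<times> {1..m}" using that by simp
    ultimately have "(\<phi> ^^ k) (z k) \<in> \<Union>(chain_piece ` (UNIV \<times> {1..m}))" by blast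
    then show ?thesis using gen_superset[of "\<Union>(chain_piece ` (UNIV \<times> {1..m}))" s] by blast
  qed
  then show "v \<in> gen s (\<Union>(chain_piece ` (UNIV \<times> {1..m})))"
    unfolding z(1) chain_comb_def by (intro submodule_sum[OF submodule_gen]) simp
qed

lemma chain_pieces_independent:
  assumes F: "finite F" "F \<subseteq> UNIV \<times> {1..m}" "\<forall>p\<in>F. f p \<in> chain_piece p" and sum: "sum f F = 0"
  shows "\<forall>p\<in>F. f p = 0"
proof -
  define g where "g k = (if ((), Suc k) \<in> F then f ((), Suc k) else 0)" for k
  have gk: "g k \<in> (\<phi> ^^ k) ` cyc s x" for k
  proof (cases "((), Suc k) \<in> F")
    case True
    then have "f ((), Suc k) \<in> chain_piece ((), Suc k)" using F(3) by blast
    then show ?thesis unfolding chain_piece_Suc g_def using True by simp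
  next
    case False
    have "(\<phi> ^^ k) 0 \<in> (\<phi> ^^ k) ` cyc s x" using submodule_zero[OF submodule_cyc] by blast
    then show ?thesis using False hom_zero[OF hom_funpow_phi] unfolding g_def by simp
  qed
  have "\<forall>k. \<exists>z. z \<in> cyc s x \<and> (\<phi> ^^ k) z = g k"
  proof
    fix k
    obtain z where "g k = (\<phi> ^^ k) z" "z \<in> cyc s x" using gk[of k] by (rule imageE)
    then show "\<exists>z. z \<in> cyc s x \<and> (\<phi> ^^ k) z = g k" by auto
  qed
  from choice[OF this] obtain z where z: "\<And>k. z k \<in> cyc s x" "\<And>k. (\<phi> ^^ k) (z k) = g k"
    by blast
  have "chain_comb z = 0"
    using sum chain_sum_reindex[OF F(1,2), of f] by (simp add: chain_comb_def z(2) g_def)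
  then have z0: "z k = 0" if "k < m" for k using chain_comb_eq_zero_imp_zero z(1) that by blast
  show ?thesis
  proof
    fix p assume p: "p \<in> F"
    obtain u i where "p = (u, i)" "i \<in> {1..m}" using F(2) p by blast
    then have k: "p = ((), Suc (i - 1))" "i - 1 < m" by auto
    have "f p = (\<phi> ^^ (i - 1)) (z (i - 1))" using z(2)[of "i - 1"] p k(1) by (simp add: g_def)
    then show "f p = 0" using z0[OF k(2)] hom_zero[OF hom_funpow_phi] by simp
  qed
qed

lemma jordan_base_if_stable_kernel_zero:
  assumes "stable_kernel = {0}"
  shows "nilpotent_jordan_base s \<phi> (UNIV :: unit set) (\<lambda>_. m) (\<lambda>_ i. (\<phi> ^^ (i - 1)) x)"
proof -
  have pieces: "(\<lambda>(\<gamma>, i). cyc s ((\<phi> ^^ (i - 1)) x)) = chain_piece"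
    by (auto simp: chain_piece_def)
  have "chain_span = UNIV"
    using chain_span_plus_stable_kernel unfolding assms by simp
  then have gen: "gen s (\<Union>(chain_piece ` (UNIV \<times> {1..m}))) = UNIV"
    using chain_span_subset_gen_pieces by blast
  show ?thesis
    unfolding nilpotent_jordan_base_def direct_sum_def pieces
  proof (intro conjI ballI allI impI)
    show "1 \<le> m" using m_pos by simp
    show "simple_sub s (cyc s ((\<phi> ^^ (i - 1)) x))" if "i \<in> {1..m}" for i
    proof (rule simple_sub_cyc_hom_image[OF hom_funpow_phi simple funpow_x_nonzero])
      show "i - 1 < m" using that by auto
    qed
    show "submodule s (chain_piece p)" for p by (simp add: chain_piece_def submodule_cyc)
    show "gen s (\<Union>(chain_piece ` (UNIV \<times> {1..m}))) = UNIV" by (rule gen)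
    show "\<phi> ((\<phi> ^^ (i - 1)) x) = (\<phi> ^^ (Suc i - 1)) x" if "1 \<le> i \<and> i < m" for i
      using that by (cases i) auto
    show "\<phi> ((\<phi> ^^ (m - 1)) x) = 0"
      using funpow_ge_nilpotency[of m x] m_pos by (cases m) auto
    show "bdd_above (range (\<lambda>_::unit. m))" by simp
    show "f p = 0"
      if "finite F \<and> F \<subseteq> UNIV \<times> {1..m} \<and> (\<forall>p\<in>F. f p \<in> chain_piece p) \<and> sum f F = 0" "p \<in> F"
      for F f p
      using chain_pieces_independent[of F f] that by blast
  qed
qed

end

context left_module
begin

lemma jordan_base_if_indecomposable:
  assumes ss: "semisimple s" and hom: "is_hom s \<phi>" and nz: "\<phi> \<noteq> (\<lambda>_. 0)"
    and nil: "\<exists>n. \<phi> ^^ n = (\<lambda>_. 0)" and ind: "indecomposable_nilpotent (End_ring s) \<phi>"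
  shows "\<exists>(k :: unit \<Rightarrow> nat) x. nilpotent_jordan_base s \<phi> UNIV k x"
proof -
  define m where "m = (LEAST n. \<phi> ^^ n = (\<lambda>_. 0))"
  have nil_m: "\<phi> ^^ m = (\<lambda>_. 0)" unfolding m_def using nil by (rule LeastI_ex)
  have "m \<noteq> 0"
  proof
    assume "m = 0"
    then have "v = 0" for v :: 'm using fun_cong[OF nil_m, of v] by simp
    then show False using nz by auto
  qed
  have top: "\<phi> ^^ (m - 1) \<noteq> (\<lambda>_. 0)"
  proof
    assume "\<phi> ^^ (m - 1) = (\<lambda>_. 0)"
    then have "m \<le> m - 1" unfolding m_def by (rule Least_le)
    then show False using \<open>m \<noteq> 0\<close> by simp
  qed
  obtain x where x: "simple_sub s (cyc s x)" "(\<phi> ^^ (m - 1)) x \<noteq> 0"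
    by (rule semisimple_hom_nonzero_on_simple[OF ss hom_funpow[OF hom] top])
  let ?Y = "cyc s ((\<phi> ^^ (m - 1)) x)"
  obtain K where K: "submodule s K" "K + ?Y = UNIV" "K \<inter> ?Y = {0}"
    by (rule semisimple_complement[OF ss submodule_cyc])
  obtain \<pi> where \<pi>: "is_hom s \<pi>" "\<And>v. \<pi> v \<in> ?Y"
    and unique: "\<And>v w. w \<in> ?Y \<Longrightarrow> v - w \<in> K \<Longrightarrow> \<pi> v = w"
    by (rule complement_projection[OF K(1) submodule_cyc K(2,3)]) blast
  have proj_id: "\<pi> w = w" if "w \<in> ?Y" for w using unique[OF that] submodule_zero[OF K(1)] by simp
  interpret nilpotent_top_projection s \<phi> x m \<pi>
    by unfold_locales (fact lmodule hom x(1) nil_m x(2) \<pi>(1) \<pi>(2) proj_id)+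
  show ?thesis
  proof (cases "stable_kernel = {0}")
    case True
    then show ?thesis using jordan_base_if_stable_kernel_zero by blast
  next
    case False
    then show ?thesis
      using decomposable_if_stable_kernel_nonzero ind by (simp add: indecomposable_nilpotent_def)
  qed
qed

end

theorem proposition2p3:
  fixes s :: "'r::ring_1 \<Rightarrow> 'm::ab_group_add \<Rightarrow> 'm"
    and \<phi> :: "'m \<Rightarrow> 'm"
  assumes "lmodule s"
    and "semisimple s"
    and "is_hom s \<phi>"
    and "\<phi> \<noteq> (\<lambda>_. 0)"
    and "\<exists>n. (\<phi> ^^ n) = (\<lambda>_. 0)"
  shows "((\<exists>(k :: unit \<Rightarrow> nat) x. nilpotent_jordan_base s \<phi> UNIV k x)
            \<longleftrightarrow> indecomposable_nilpotent (End_ring s) \<phi>)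
       \<and> (indecomposable_nilpotent (End_ring s) \<phi>
            \<longleftrightarrow> finitely_generated s \<and> (\<phi> ^^ (comp_length s - 1)) \<noteq> (\<lambda>_. 0))"
proof -
  interpret left_module s by unfold_locales (rule assms(1))
  obtain n where n: "\<phi> ^^ n = (\<lambda>_. 0)" using assms(5) ..
  have jordan_imp_length: "finitely_generated s \<and> \<phi> ^^ (comp_length s - 1) \<noteq> (\<lambda>_. 0)"
    if "nilpotent_jordan_base s \<phi> (UNIV :: unit set) k x" for k x
    using single_block_jordan_base_imp_length[OF assms(3) that] by blast
  have length_imp_indecomposable: "indecomposable_nilpotent (End_ring s) \<phi>"
    if "finitely_generated s" "\<phi> ^^ (comp_length s - 1) \<noteq> (\<lambda>_. 0)"
    using indecomposable_if_funpow_comp_length_nonzero[OF assms(2) that(1) assms(3) n that(2)] .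
  have indecomposable_imp_jordan: "\<exists>(k :: unit \<Rightarrow> nat) x. nilpotent_jordan_base s \<phi> UNIV k x"
    if "indecomposable_nilpotent (End_ring s) \<phi>"
    using jordan_base_if_indecomposable[OF assms(2-5) that] .
  show ?thesis
    using jordan_imp_length length_imp_indecomposable indecomposable_imp_jordan by meson
qed

end
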